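(* Let $G$ be a simple graph on vertex set $\{x_1,\dots,x_n\}$ and let $e=x_ix_j$ be an edge of $G$. Then $$\big(I(G)^{(2)}:e\big)=I(G)+\big(x_px_q: x_p\in N_G(x_i),\ x_q\in N_G(x_j),\ x_p\neq x_q\big)+\big(x_t: x_t\in N_G(x_i)\cap N_G(x_j)\big).$$
   Context: $S=\mathbb{K}[x_1,\dots,x_n]$ over a field $\mathbb{K}$; vertices of $G$ are identified with variables and edges with the corresponding quadratic monomials. $I(G)=(x_ix_j : x_ix_j\in E(G))$ is the edge ideal. $N_G(x_i)=\{x_j : x_ix_j\in E(G)\}$. With $\mathcal{C}(G)$ the set of minimal vertex covers of $G$ and $\mathfrak{p}_C$ the ideal generated by the variables in $C$, the symbolic power is $I(G)^{(s)}=\bigcap_{C\in\mathcal{C}(G)}\mathfrak{p}_C^s$. *)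

theory Defs
  imports Main "HOL-Library.Poly_Mapping"
begin

text \<open>Polynomials over a field 'a in variables x_0, x_1, ...: finitely supported
  maps from monomials (finitely supported exponent vectors) to coefficients.
  The ring S = K[x_0,...,x_(n-1)] is the subset of polynomials only involving
  variables with index < n.\<close>

type_synonym 'a mpoly = "(nat \<Rightarrow>\<^sub>0 nat) \<Rightarrow>\<^sub>0 'a"

definition polyring :: "nat \<Rightarrow> ('a::field) mpoly set" where
  "polyring n = {p :: 'a mpoly. \<forall>m\<in>Poly_Mapping.keys p. Poly_Mapping.keys m \<subseteq> {..<n}}"

definition Var :: "nat \<Rightarrow> ('a::field) mpoly" where
  "Var i = Poly_Mapping.single (Poly_Mapping.single i 1) 1"

definition ideal_gen :: "'b::comm_ring_1 set \<Rightarrow> 'b set \<Rightarrow> 'b set" where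
  "ideal_gen R S = {x. \<exists>A f. finite A \<and> A \<subseteq> S \<and> (\<forall>a\<in>A. f a \<in> R) \<and> x = (\<Sum>a\<in>A. f a * a)}"

definition ideal_prod :: "'b::comm_ring_1 set \<Rightarrow> 'b set \<Rightarrow> 'b set \<Rightarrow> 'b set" where
  "ideal_prod R I J = ideal_gen R {a * b | a b. a \<in> I \<and> b \<in> J}"

fun ideal_pow :: "'b::comm_ring_1 set \<Rightarrow> 'b set \<Rightarrow> nat \<Rightarrow> 'b set" where
  "ideal_pow R I 0 = R"
| "ideal_pow R I (Suc s) = ideal_prod R (ideal_pow R I s) I"

definition colon :: "'b::comm_ring_1 set \<Rightarrow> 'b set \<Rightarrow> 'b \<Rightarrow> 'b set" where
  "colon R I f = {g \<in> R. g * f \<in> I}"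

definition simple_graph :: "nat \<Rightarrow> (nat \<Rightarrow> nat \<Rightarrow> bool) \<Rightarrow> bool" where
  "simple_graph n E \<longleftrightarrow> (\<forall>i j. E i j \<longrightarrow> i < n \<and> j < n \<and> i \<noteq> j \<and> E j i)"

definition edge_ideal :: "nat \<Rightarrow> (nat \<Rightarrow> nat \<Rightarrow> bool) \<Rightarrow> ('a::field) mpoly set" where
  "edge_ideal n E = ideal_gen (polyring n) {Var i * Var j | i j. E i j}"

definition vertex_cover :: "nat \<Rightarrow> (nat \<Rightarrow> nat \<Rightarrow> bool) \<Rightarrow> nat set \<Rightarrow> bool" where
  "vertex_cover n E C \<longleftrightarrow> C \<subseteq> {..<n} \<and> (\<forall>i j. E i j \<longrightarrow> i \<in> C \<or> j \<in> C)"

definition min_vertex_cover :: "nat \<Rightarrow> (nat \<Rightarrow> nat \<Rightarrow> bool) \<Rightarrow> nat set \<Rightarrow> bool" where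
  "min_vertex_cover n E C \<longleftrightarrow> vertex_cover n E C \<and> (\<forall>D. D \<subset> C \<longrightarrow> \<not> vertex_cover n E D)"

definition prime_of_cover :: "nat \<Rightarrow> nat set \<Rightarrow> ('a::field) mpoly set" where
  "prime_of_cover n C = ideal_gen (polyring n) (Var ` C)"

definition symbolic_power :: "nat \<Rightarrow> (nat \<Rightarrow> nat \<Rightarrow> bool) \<Rightarrow> nat \<Rightarrow> ('a::field) mpoly set" where
  "symbolic_power n E s = polyring n \<inter>
     \<Inter>{ideal_pow (polyring n) (prime_of_cover n C) s | C. min_vertex_cover n E C}"

end

theory Submission imports Defs begin

text \<open>
  For every minimal vertex cover C, each proposed generator g is such
  that g e is divisible by a product of two variables from C (C meets the edge ij and the
  edge, pair or common neighbour making up g), so g e lies in p_C^2; hence the generators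
  lie in the colon ideal.
  Conversely, if f e lies in every p_C^2, then every monomial of f e has at least two
  variables from C, counted with multiplicity. Take a monomial u of f with support S. If S
  contains an edge, distinct neighbours p of i and q of j, or a common neighbour of i and
  j, then u is a multiple of a generator. Otherwise S is independent and one of i, j, say
  j, has no neighbour in S, so a minimal vertex cover inside the complement of S and j
  exists; it contains i, and u e has only one variable from it, a contradiction.
\<close>

definition subring :: "'b::comm_ring_1 set \<Rightarrow> bool" where
  "subring R \<longleftrightarrow> 0 \<in> R \<and> 1 \<in> R \<and> (\<forall>x\<in>R. \<forall>y\<in>R. x + y \<in> R \<and> x * y \<in> R)"

lemma ideal_gen_least:
  assumes "0 \<in> J" and "\<And>x y. x \<in> J \<Longrightarrow> y \<in> J \<Longrightarrow> x + y \<in> J"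
    and "\<And>h s. h \<in> R \<Longrightarrow> s \<in> S \<Longrightarrow> h * s \<in> J"
  shows "ideal_gen R S \<subseteq> J"
proof
  fix x assume "x \<in> ideal_gen R S"
  then obtain A f where A: "finite A" "A \<subseteq> S" "\<forall>a\<in>A. f a \<in> R" and x: "x = (\<Sum>a\<in>A. f a * a)"
    unfolding ideal_gen_def by blast
  from A have "(\<Sum>a\<in>A. f a * a) \<in> J"
    by (induction A rule: finite_induct) (auto intro: assms)
  then show "x \<in> J" unfolding x .
qed

lemma ideal_gen_zero: "0 \<in> ideal_gen R S"
  unfolding ideal_gen_def by (rule CollectI, rule exI[of _ "{}"]) auto

lemma ideal_gen_generator:
  assumes "h \<in> R" "s \<in> S"
  shows "h * s \<in> ideal_gen R S"
  unfolding ideal_gen_def using assms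
  by (intro CollectI exI[of _ "{s}"] exI[of _ "\<lambda>_. h"]) auto

lemma ideal_gen_add:
  assumes R: "subring R" and x: "x \<in> ideal_gen R S" and y: "y \<in> ideal_gen R S"
  shows "x + y \<in> ideal_gen R S"
proof -
  obtain A f where A: "finite A" "A \<subseteq> S" "\<forall>a\<in>A. f a \<in> R" "x = (\<Sum>a\<in>A. f a * a)"
    using x unfolding ideal_gen_def by blast
  obtain B g where B: "finite B" "B \<subseteq> S" "\<forall>a\<in>B. g a \<in> R" "y = (\<Sum>a\<in>B. g a * a)"
    using y unfolding ideal_gen_def by blast
  define h where "h a = (if a \<in> A then f a else 0) + (if a \<in> B then g a else 0)" for a
  have h: "\<forall>a\<in>A \<union> B. h a \<in> R" using R A B unfolding h_def subring_def by auto
  have extend_A: "(\<Sum>a\<in>A \<union> B. (if a \<in> A then f a else 0) * a) = (\<Sum>a\<in>A. f a * a)"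
    by (rule sum.mono_neutral_cong_right) (use A B in auto)
  have extend_B: "(\<Sum>a\<in>A \<union> B. (if a \<in> B then g a else 0) * a) = (\<Sum>a\<in>B. g a * a)"
    by (rule sum.mono_neutral_cong_right) (use A B in auto)
  have "x + y = (\<Sum>a\<in>A \<union> B. h a * a)"
    unfolding h_def distrib_right sum.distrib extend_A extend_B A(4) B(4) ..
  then show ?thesis unfolding ideal_gen_def using A B h by blast
qed

lemma ideal_gen_sum:
  assumes "subring R" and "finite A" and "\<forall>a\<in>A. g a \<in> ideal_gen R S"
  shows "sum g A \<in> ideal_gen R S"
  using assms(2,3) by (induction A rule: finite_induct) (auto simp: ideal_gen_zero ideal_gen_add[OF assms(1)])

lemma ideal_pow_Suc_mult:
  assumes "1 \<in> R" "a \<in> ideal_pow R I k" "b \<in> I"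
  shows "a * b \<in> ideal_pow R I (Suc k)"
proof -
  have "1 * (a * b) \<in> ideal_gen R {a * b | a b. a \<in> ideal_pow R I k \<and> b \<in> I}"
    using assms by (intro ideal_gen_generator) auto
  then show ?thesis by (simp add: ideal_prod_def)
qed

lemma ideal_pow_Suc_zero: "0 \<in> ideal_pow R I (Suc k)"
  by (simp add: ideal_prod_def ideal_gen_zero)

lemma ideal_pow_Suc_add:
  assumes "subring R" "x \<in> ideal_pow R I (Suc k)" "y \<in> ideal_pow R I (Suc k)"
  shows "x + y \<in> ideal_pow R I (Suc k)"
  using ideal_gen_add[OF assms(1)] assms(2,3) by (simp add: ideal_prod_def)

lemma subring_polyring: "subring (polyring n :: 'a::field mpoly set)"
proof -
  have "p * q \<in> polyring n" if "p \<in> polyring n" "q \<in> polyring n" for p q :: "'a mpoly"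
  proof -
    have "Poly_Mapping.keys m \<subseteq> {..<n}" if "m \<in> Poly_Mapping.keys (p * q)" for m
    proof -
      obtain a b where "m = a + b" "a \<in> Poly_Mapping.keys p" "b \<in> Poly_Mapping.keys q"
        using \<open>m \<in> Poly_Mapping.keys (p * q)\<close> keys_mult[of p q] by blast
      then show ?thesis
        using \<open>p \<in> polyring n\<close> \<open>q \<in> polyring n\<close> keys_add[of a b] unfolding polyring_def by blast
    qed
    then show ?thesis unfolding polyring_def by blast
  qed
  moreover have "p + q \<in> polyring n" if "p \<in> polyring n" "q \<in> polyring n" for p q :: "'a mpoly"
    using that keys_add[of p q] unfolding polyring_def by blast
  moreover have "0 \<in> polyring n" "1 \<in> polyring n" by (simp_all add: polyring_def)
  ultimately show ?thesis unfolding subring_def by blast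
qed

lemma polyring_mult: "p \<in> polyring n \<Longrightarrow> q \<in> polyring n \<Longrightarrow> p * q \<in> (polyring n :: 'a::field mpoly set)"
  using subring_polyring unfolding subring_def by blast

lemma one_in_polyring: "1 \<in> (polyring n :: 'a::field mpoly set)"
  using subring_polyring unfolding subring_def by blast

lemma Var_in_polyring: "k < n \<Longrightarrow> Var k \<in> polyring n"
  by (auto simp: Var_def polyring_def)

lemma Var_mult_Var:
  "Var a * Var b = (Poly_Mapping.single (Poly_Mapping.single a 1 + Poly_Mapping.single b 1) 1 :: 'a::field mpoly)"
  by (simp add: Var_def mult_single)

lemma sum_single_lookup_keys:
  "f = (\<Sum>m\<in>Poly_Mapping.keys f. Poly_Mapping.single m (Poly_Mapping.lookup f m))"
  by (rule poly_mapping_eqI) (simp add: lookup_sum lookup_single when_def in_keys_iff)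

lemma lookup_mult_single_one:
  fixes f :: "'k::cancel_comm_monoid_add \<Rightarrow>\<^sub>0 'b::semiring_1"
  shows "Poly_Mapping.lookup (f * Poly_Mapping.single u 1) (m + u) = Poly_Mapping.lookup f m"
proof -
  have "f * Poly_Mapping.single u 1
      = (\<Sum>k\<in>Poly_Mapping.keys f. Poly_Mapping.single k (Poly_Mapping.lookup f k)) * Poly_Mapping.single u 1"
    using sum_single_lookup_keys[of f] by simp
  also have "\<dots> = (\<Sum>k\<in>Poly_Mapping.keys f. Poly_Mapping.single (k + u) (Poly_Mapping.lookup f k))"
    by (simp add: sum_distrib_right mult_single)
  finally have expansion: "f * Poly_Mapping.single u 1 = \<dots>" .
  show ?thesis unfolding expansion
    by (cases "m \<in> Poly_Mapping.keys f") (simp_all add: lookup_sum lookup_single when_def in_keys_iff)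
qed

lemma add_single_of_in_keys:
  assumes "a \<in> Poly_Mapping.keys (m :: 'k \<Rightarrow>\<^sub>0 nat)"
  obtains m' where "m = m' + Poly_Mapping.single a 1"
proof
  show "m = (m - Poly_Mapping.single a 1) + Poly_Mapping.single a 1"
    using assms by (intro poly_mapping_eqI) (auto simp: lookup_add lookup_minus lookup_single in_keys_iff when_def)
qed

lemma add_single_single_of_in_keys:
  assumes "a \<in> Poly_Mapping.keys (m :: 'k \<Rightarrow>\<^sub>0 nat)" "b \<in> Poly_Mapping.keys m" "a \<noteq> b"
  obtains m' where "m = m' + (Poly_Mapping.single a 1 + Poly_Mapping.single b 1)"
proof
  let ?w = "Poly_Mapping.single a 1 + Poly_Mapping.single b 1"
  show "m = (m - ?w) + ?w"
  proof (rule poly_mapping_eqI)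
    fix k show "Poly_Mapping.lookup m k = Poly_Mapping.lookup (m - ?w + ?w) k"
      using assms by (cases "k = a"; cases "k = b") (auto simp: lookup_add lookup_minus lookup_single in_keys_iff)
  qed
qed

lemma monomial_in_ideal_gen_of_dvd:
  assumes "Poly_Mapping.keys (m + w) \<subseteq> {..<n}" and "Poly_Mapping.single w 1 \<in> S"
  shows "Poly_Mapping.single (m + w) c \<in> ideal_gen (polyring n) (S :: 'a::field mpoly set)"
proof -
  have "Poly_Mapping.keys m \<subseteq> Poly_Mapping.keys (m + w)"
    by (auto simp: in_keys_iff lookup_add)
  then have "Poly_Mapping.single m c \<in> polyring n"
    using assms(1) unfolding polyring_def by auto
  then have "Poly_Mapping.single m c * Poly_Mapping.single w 1 \<in> ideal_gen (polyring n) S"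
    using assms(2) by (rule ideal_gen_generator)
  then show ?thesis by (simp add: mult_single)
qed

section \<open>Degree with respect to a set of variables\<close>

definition cover_degree :: "nat set \<Rightarrow> (nat \<Rightarrow>\<^sub>0 nat) \<Rightarrow> nat" where
  "cover_degree C m = (\<Sum>k\<in>C. Poly_Mapping.lookup m k)"

definition cover_degree_ge :: "nat set \<Rightarrow> nat \<Rightarrow> 'a::field mpoly \<Rightarrow> bool" where
  "cover_degree_ge C d g \<longleftrightarrow> (\<forall>m\<in>Poly_Mapping.keys g. d \<le> cover_degree C m)"

lemma cover_degree_add: "cover_degree C (a + b) = cover_degree C a + cover_degree C b"
  by (simp add: cover_degree_def lookup_add sum.distrib)

lemma cover_degree_single:
  "finite C \<Longrightarrow> cover_degree C (Poly_Mapping.single k 1) = (if k \<in> C then 1 else 0)"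
  by (simp add: cover_degree_def lookup_single when_def)

lemma cover_degree_disjoint: "C \<inter> Poly_Mapping.keys m = {} \<Longrightarrow> cover_degree C m = 0"
  unfolding cover_degree_def by (rule sum.neutral) (auto simp: in_keys_iff)

lemma cover_degree_ge_mult:
  assumes "cover_degree_ge C d a" "cover_degree_ge C e b"
  shows "cover_degree_ge C (d + e) (a * b)"
  unfolding cover_degree_ge_def
proof
  fix m assume "m \<in> Poly_Mapping.keys (a * b)"
  then obtain u v where "m = u + v" "u \<in> Poly_Mapping.keys a" "v \<in> Poly_Mapping.keys b"
    using keys_mult[of a b] by blast
  with assms show "d + e \<le> cover_degree C m"
    unfolding cover_degree_ge_def by (simp add: cover_degree_add add_mono)
qed

lemma cover_degree_ge_ideal_gen:
  assumes "\<forall>s\<in>S. cover_degree_ge C d s"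
  shows "x \<in> ideal_gen R S \<Longrightarrow> cover_degree_ge C d x"
proof -
  have "ideal_gen R S \<subseteq> {x. cover_degree_ge C d x}"
  proof (rule ideal_gen_least)
    show "0 \<in> {x. cover_degree_ge C d x}" by (simp add: cover_degree_ge_def)
    show "a + b \<in> {x. cover_degree_ge C d x}"
      if "a \<in> {x. cover_degree_ge C d x}" "b \<in> {x. cover_degree_ge C d x}" for a b
      using that keys_add[of a b] unfolding cover_degree_ge_def by blast
    show "h * s \<in> {x. cover_degree_ge C d x}" if "s \<in> S" for h s
    proof -
      have "cover_degree_ge C 0 h" by (simp add: cover_degree_ge_def)
      then show ?thesis using cover_degree_ge_mult assms that by fastforce
    qed
  qed
  then show "x \<in> ideal_gen R S \<Longrightarrow> cover_degree_ge C d x" by blast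
qed

lemma cover_degree_ge_ideal_pow:
  assumes "finite C"
  shows "x \<in> ideal_pow R (prime_of_cover n C) d \<Longrightarrow> cover_degree_ge C d (x :: 'a::field mpoly)"
proof (induction d arbitrary: x)
  case 0
  then show ?case by (simp add: cover_degree_ge_def)
next
  case (Suc d)
  have "cover_degree_ge C 1 (Var k :: 'a mpoly)" if "k \<in> C" for k
    using that assms cover_degree_single[of C k] unfolding cover_degree_ge_def Var_def by simp
  then have "\<forall>s\<in>Var ` C. cover_degree_ge C 1 (s :: 'a mpoly)" by blast
  then have prime: "cover_degree_ge C 1 b" if "b \<in> prime_of_cover n C" for b :: "'a mpoly"
    using that unfolding prime_of_cover_def by (rule cover_degree_ge_ideal_gen)
  have "cover_degree_ge C (Suc d) s"
    if s: "s \<in> {a * b | a b. a \<in> ideal_pow R (prime_of_cover n C) d \<and> b \<in> prime_of_cover n C}" for s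
  proof -
    obtain a b where "s = a * b" "a \<in> ideal_pow R (prime_of_cover n C) d" "b \<in> prime_of_cover n C"
      using s by blast
    then show ?thesis using cover_degree_ge_mult[OF Suc.IH prime, of a b] by simp
  qed
  then have "\<forall>s\<in>{a * b | a b. a \<in> ideal_pow R (prime_of_cover n C) d \<and> b \<in> prime_of_cover n C}.
      cover_degree_ge C (Suc d) s"
    by blast
  then show ?case
    using Suc.prems unfolding ideal_pow.simps ideal_prod_def by (rule cover_degree_ge_ideal_gen)
qed

section \<open>Minimal vertex covers\<close>

lemma vertex_cover_finite: "vertex_cover n E C \<Longrightarrow> finite C"
  unfolding vertex_cover_def using finite_subset by blast

lemma min_vertex_cover_finite: "min_vertex_cover n E C \<Longrightarrow> finite C"
  unfolding min_vertex_cover_def using vertex_cover_finite by blast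

lemma min_vertex_cover_covers: "min_vertex_cover n E C \<Longrightarrow> E a b \<Longrightarrow> a \<in> C \<or> b \<in> C"
  unfolding min_vertex_cover_def vertex_cover_def by blast

lemma exists_min_vertex_cover_subset:
  "vertex_cover n E D \<Longrightarrow> \<exists>C\<subseteq>D. min_vertex_cover n E C"
proof (induction "card D" arbitrary: D rule: less_induct)
  case less
  show ?case
  proof (cases "min_vertex_cover n E D")
    case False
    then obtain D' where D': "D' \<subset> D" "vertex_cover n E D'"
      using less.prems unfolding min_vertex_cover_def by blast
    have "card D' < card D"
      using D'(1) psubset_card_mono vertex_cover_finite[OF less.prems] by blast
    then obtain C where "C \<subseteq> D'" "min_vertex_cover n E C" using less.hyps D'(2) by blast
    then show ?thesis using D'(1) by blast
  qed blast
qed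

lemma min_vertex_cover_avoiding:
  assumes G: "simple_graph n E" and xy: "E x y"
    and indep: "\<forall>a b. E a b \<longrightarrow> \<not> (a \<in> S \<and> b \<in> S)"
    and no_nbr: "\<forall>s\<in>S. \<not> E y s"
  obtains C where "min_vertex_cover n E C" "C \<inter> S = {}" "x \<in> C" "y \<notin> C"
proof -
  have "vertex_cover n E ({..<n} - S - {y})"
    unfolding vertex_cover_def
  proof (intro conjI allI impI)
    fix a b assume ab: "E a b"
    then have "a < n" "b < n" "a \<noteq> b" "E b a" using G unfolding simple_graph_def by blast+
    then show "a \<in> {..<n} - S - {y} \<or> b \<in> {..<n} - S - {y}"
      using ab indep no_nbr by auto
  qed auto
  then have "\<exists>C\<subseteq>{..<n} - S - {y}. min_vertex_cover n E C"
    by (rule exists_min_vertex_cover_subset)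
  then obtain C where C: "C \<subseteq> {..<n} - S - {y}" "min_vertex_cover n E C" by (elim exE conjE)
  then have "C \<inter> S = {}" "y \<notin> C" by auto
  moreover have "x \<in> C" using min_vertex_cover_covers[OF C(2) xy] \<open>y \<notin> C\<close> by blast
  ultimately show ?thesis using C(2) that by blast
qed

lemma min_vertex_cover_separating_edge:
  assumes G: "simple_graph n E" and e: "E i j"
    and indep: "\<forall>a b. E a b \<longrightarrow> \<not> (a \<in> S \<and> b \<in> S)"
    and no_pair: "\<forall>p q. E i p \<and> E j q \<and> p \<in> S \<and> q \<in> S \<longrightarrow> p = q"
    and no_common: "\<forall>t\<in>S. \<not> (E i t \<and> E j t)"
  obtains C where "min_vertex_cover n E C" "C \<inter> S = {}" "i \<in> C \<longleftrightarrow> j \<notin> C"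
proof (cases "\<forall>s\<in>S. \<not> E j s")
  case True
  then show ?thesis using min_vertex_cover_avoiding[OF G e indep] that by metis
next
  case False
  then have "\<forall>s\<in>S. \<not> E i s" using no_pair no_common by metis
  moreover have "E j i" using G e unfolding simple_graph_def by blast
  ultimately show ?thesis using min_vertex_cover_avoiding[OF G _ indep] that by metis
qed

section \<open>The colon ideal\<close>

lemma symbolic_powerI:
  "x \<in> polyring n \<Longrightarrow> (\<And>C. min_vertex_cover n E C \<Longrightarrow> x \<in> ideal_pow (polyring n) (prime_of_cover n C) s)
    \<Longrightarrow> x \<in> symbolic_power n E s"
  unfolding symbolic_power_def by blast

lemma symbolic_powerD:
  "x \<in> symbolic_power n E s \<Longrightarrow> min_vertex_cover n E C
    \<Longrightarrow> x \<in> ideal_pow (polyring n) (prime_of_cover n C) s"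
  unfolding symbolic_power_def by blast

definition edge_colon_gens :: "(nat \<Rightarrow> nat \<Rightarrow> bool) \<Rightarrow> nat \<Rightarrow> nat \<Rightarrow> 'a::field mpoly set" where
  "edge_colon_gens E i j =
     {Var a * Var b | a b. E a b}
     \<union> {Var p * Var q | p q. E i p \<and> E j q \<and> p \<noteq> q}
     \<union> {Var t | t. E i t \<and> E j t}"

lemma Var_mult_Var_in_ideal_pow_two:
  assumes "u \<in> C" "v \<in> C" "h \<in> polyring n"
  shows "h * (Var u * Var v) \<in> ideal_pow (polyring n) (prime_of_cover n C) 2"
proof -
  have Var: "Var w \<in> prime_of_cover n C" if "w \<in> C" for w
    using ideal_gen_generator[OF one_in_polyring, of "Var w" "Var ` C" n] that
    unfolding prime_of_cover_def by simp
  have "h \<in> ideal_pow (polyring n) (prime_of_cover n C) 0" using assms(3) by simp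
  then have "h * Var u * Var v \<in> ideal_pow (polyring n) (prime_of_cover n C) (Suc (Suc 0))"
    using Var assms(1,2) one_in_polyring by (intro ideal_pow_Suc_mult)
  then show ?thesis by (simp add: numeral_2_eq_2 mult.assoc)
qed

lemma gen_mult_edge_factors_through_cover:
  assumes G: "simple_graph n E" and e: "E i j" and C: "min_vertex_cover n E C"
    and g: "g \<in> edge_colon_gens E i j"
  obtains u v h where "u \<in> C" "v \<in> C" "h \<in> polyring n" "g * (Var i * Var j) = h * (Var u * Var v)"
proof -
  have R: "Var a \<in> polyring n" "Var b \<in> polyring n" if "E a b" for a b
    using G that Var_in_polyring unfolding simple_graph_def by blast+
  have ij: "i \<in> C \<or> j \<in> C" using min_vertex_cover_covers[OF C e] .
  from g consider (edge) a b where "g = Var a * Var b" "E a b"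
    | (pair) p q where "g = Var p * Var q" "E i p" "E j q"
    | (common) t where "g = Var t" "E i t" "E j t"
    unfolding edge_colon_gens_def by blast
  then show ?thesis
  proof cases
    case edge
    with ij min_vertex_cover_covers[OF C edge(2)] R[OF e] R[OF edge(2)] show ?thesis
      using that[of a i "Var b * Var j"] that[of a j "Var b * Var i"]
        that[of b i "Var a * Var j"] that[of b j "Var a * Var i"]
      by (auto simp: ac_simps intro: polyring_mult)
  next
    case pair
    with ij min_vertex_cover_covers[OF C pair(2)] min_vertex_cover_covers[OF C pair(3)] R[OF pair(2)] R[OF pair(3)]
    show ?thesis
      using that[of i j g] that[of p j "Var q * Var i"] that[of q i "Var p * Var j"]
      by (auto simp: ac_simps intro: polyring_mult)
  next
    case common
    with ij min_vertex_cover_covers[OF C common(2)] min_vertex_cover_covers[OF C common(3)] R[OF e] R[OF common(2)]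
    show ?thesis
      using that[of i j g] that[of t j "Var i"] that[of t i "Var j"]
      by (auto simp: ac_simps)
  qed
qed

lemma ideal_gen_edge_colon_gens_subset_colon:
  assumes G: "simple_graph n E" and e: "E i j"
  shows "ideal_gen (polyring n) (edge_colon_gens E i j)
    \<subseteq> colon (polyring n) (symbolic_power n E 2 :: 'a::field mpoly set) (Var i * Var j)"
proof (rule ideal_gen_least)
  let ?J = "colon (polyring n) (symbolic_power n E 2 :: 'a mpoly set) (Var i * Var j)"
  have Var_R: "Var a \<in> polyring n" "Var b \<in> polyring n" if "E a b" for a b
    using G that Var_in_polyring unfolding simple_graph_def by blast+
  show "0 \<in> ?J"
    using subring_polyring[of n, where 'a='a] ideal_pow_Suc_zero[where k=1, unfolded Suc_1]
    unfolding colon_def subring_def by (auto intro: symbolic_powerI)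
  show "x + y \<in> ?J" if x: "x \<in> ?J" and y: "y \<in> ?J" for x y
  proof -
    have "x + y \<in> polyring n" "(x + y) * (Var i * Var j) \<in> polyring n"
      using x y subring_polyring[of n, where 'a='a]
      unfolding colon_def symbolic_power_def subring_def distrib_right by auto
    moreover have "(x + y) * (Var i * Var j) \<in> ideal_pow (polyring n) (prime_of_cover n C) 2"
      if "min_vertex_cover n E C" for C
      using x y symbolic_powerD[OF _ that] ideal_pow_Suc_add[OF subring_polyring, where k=1, unfolded Suc_1]
      unfolding colon_def distrib_right by blast
    ultimately show ?thesis unfolding colon_def by (auto intro: symbolic_powerI)
  qed
  show "h * g \<in> ?J"
    if h: "h \<in> polyring n" and g: "g \<in> edge_colon_gens E i j" for h g
  proof -
    have "g \<in> polyring n"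
      using g Var_R unfolding edge_colon_gens_def by (blast intro: polyring_mult)
    then have hg: "h * g \<in> polyring n" and hge: "h * g * (Var i * Var j) \<in> polyring n"
      using h Var_R[OF e] by (auto intro: polyring_mult)
    have "h * g * (Var i * Var j) \<in> ideal_pow (polyring n) (prime_of_cover n C) 2"
      if C: "min_vertex_cover n E C" for C
    proof -
      obtain u v h' where "u \<in> C" "v \<in> C" "h' \<in> polyring n" "g * (Var i * Var j) = h' * (Var u * Var v)"
        using gen_mult_edge_factors_through_cover[OF G e C g] .
      then show ?thesis
        using Var_mult_Var_in_ideal_pow_two[of u C v "h * h'" n] h by (simp add: polyring_mult mult.assoc)
    qed
    then show ?thesis using hg hge unfolding colon_def symbolic_power_def by blast
  qed
qed

lemma monomial_of_colon_in_ideal_gen: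
  fixes f :: "'a::field mpoly" and c :: 'a
  assumes G: "simple_graph n E" and e: "E i j" and f: "f \<in> polyring n"
    and deg: "\<And>C. min_vertex_cover n E C \<Longrightarrow> cover_degree_ge C 2 (f * (Var i * Var j))"
    and m: "m \<in> Poly_Mapping.keys f"
  shows "Poly_Mapping.single m c \<in> ideal_gen (polyring n) (edge_colon_gens E i j)"
proof -
  let ?S = "Poly_Mapping.keys m"
  have m_n: "Poly_Mapping.keys m \<subseteq> {..<n}" using f m unfolding polyring_def by blast
  have two_vars: "Poly_Mapping.single m c \<in> ideal_gen (polyring n) (edge_colon_gens E i j)"
    if ab: "a \<in> ?S" "b \<in> ?S" "a \<noteq> b" "(Var a * Var b :: 'a mpoly) \<in> edge_colon_gens E i j" for a b
  proof -
    obtain m' where m': "m = m' + (Poly_Mapping.single a 1 + Poly_Mapping.single b 1)"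
      using add_single_single_of_in_keys ab(1-3) .
    have "Poly_Mapping.keys (m' + (Poly_Mapping.single a 1 + Poly_Mapping.single b 1)) \<subseteq> {..<n}"
      using m_n unfolding m' .
    moreover have "(Poly_Mapping.single (Poly_Mapping.single a 1 + Poly_Mapping.single b 1) 1 :: 'a mpoly)
        \<in> edge_colon_gens E i j"
      using ab(4) unfolding Var_mult_Var .
    ultimately show ?thesis unfolding m' by (rule monomial_in_ideal_gen_of_dvd)
  qed
  consider (edge) a b where "E a b" "a \<in> ?S" "b \<in> ?S"
    | (pair) p q where "E i p" "E j q" "p \<noteq> q" "p \<in> ?S" "q \<in> ?S"
    | (common) t where "E i t" "E j t" "t \<in> ?S"
    | (none) "\<forall>a b. E a b \<longrightarrow> \<not> (a \<in> ?S \<and> b \<in> ?S)"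
        "\<forall>p q. E i p \<and> E j q \<and> p \<in> ?S \<and> q \<in> ?S \<longrightarrow> p = q"
        "\<forall>t\<in>?S. \<not> (E i t \<and> E j t)"
    by blast
  then show ?thesis
  proof cases
    case edge
    moreover have "a \<noteq> b" using G edge(1) unfolding simple_graph_def by blast
    ultimately show ?thesis using two_vars unfolding edge_colon_gens_def by blast
  next
    case pair
    then show ?thesis using two_vars unfolding edge_colon_gens_def by blast
  next
    case common
    obtain m' where m': "m = m' + Poly_Mapping.single t 1"
      using add_single_of_in_keys common(3) .
    have "(Var t :: 'a mpoly) \<in> edge_colon_gens E i j" using common unfolding edge_colon_gens_def by blast
    moreover have "Poly_Mapping.keys (m' + Poly_Mapping.single t 1) \<subseteq> {..<n}"
      using m_n unfolding m' .
    ultimately show ?thesis unfolding m' Var_def by (intro monomial_in_ideal_gen_of_dvd)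
  next
    case none
    obtain C where C: "min_vertex_cover n E C" "C \<inter> ?S = {}" "i \<in> C \<longleftrightarrow> j \<notin> C"
      using min_vertex_cover_separating_edge[OF G e none] .
    let ?w = "Poly_Mapping.single i 1 + Poly_Mapping.single j 1"
    have "m + ?w \<in> Poly_Mapping.keys (f * (Var i * Var j))"
      using m lookup_mult_single_one[of f ?w m] by (simp add: Var_mult_Var in_keys_iff)
    then have "2 \<le> cover_degree C (m + ?w)"
      using deg[OF C(1)] unfolding cover_degree_ge_def by blast
    moreover have "cover_degree C (m + ?w) = 1"
      using C cover_degree_disjoint[of C m] min_vertex_cover_finite[OF C(1)]
        cover_degree_single[of C i] cover_degree_single[of C j]
      by (auto simp: cover_degree_add)
    ultimately show ?thesis by simp
  qed
qed

lemma colon_subset_ideal_gen_edge_colon_gens: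
  assumes G: "simple_graph n E" and e: "E i j"
  shows "colon (polyring n) (symbolic_power n E 2 :: 'a::field mpoly set) (Var i * Var j)
    \<subseteq> ideal_gen (polyring n) (edge_colon_gens E i j)"
proof
  fix f :: "'a mpoly"
  assume "f \<in> colon (polyring n) (symbolic_power n E 2) (Var i * Var j)"
  then have f: "f \<in> polyring n" and "f * (Var i * Var j) \<in> symbolic_power n E 2"
    unfolding colon_def by auto
  then have "cover_degree_ge C 2 (f * (Var i * Var j))" if "min_vertex_cover n E C" for C
    using cover_degree_ge_ideal_pow[OF min_vertex_cover_finite[OF that] symbolic_powerD] that
    by blast
  then have "(\<Sum>m\<in>Poly_Mapping.keys f. Poly_Mapping.single m (Poly_Mapping.lookup f m))
      \<in> ideal_gen (polyring n) (edge_colon_gens E i j)"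
    using monomial_of_colon_in_ideal_gen[OF G e f] by (intro ideal_gen_sum[OF subring_polyring]) auto
  then show "f \<in> ideal_gen (polyring n) (edge_colon_gens E i j)"
    using sum_single_lookup_keys[of f] by simp
qed

theorem lemma3p2:
  fixes n :: nat and E :: "nat \<Rightarrow> nat \<Rightarrow> bool" and i j :: nat
  assumes "simple_graph n E" and "E i j"
  shows "colon (polyring n) (symbolic_power n E 2 :: ('a::field) mpoly set) (Var i * Var j)
       = ideal_gen (polyring n)
           ({Var a * Var b | a b. E a b}
            \<union> {Var p * Var q | p q. E i p \<and> E j q \<and> p \<noteq> q}
            \<union> {Var t | t. E i t \<and> E j t})"
  unfolding edge_colon_gens_def[symmetric]
  using colon_subset_ideal_gen_edge_colon_gens[OF assms] ideal_gen_edge_colon_gens_subset_colon[OF assms]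
  by (rule equalityI)

end
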